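(* (i) The group $E_{n+1}(A)$ of elementary matrices acts trivially on the image of $i_*:H_*({\mathbb{FL}}(A^n),\mathbb Z)\to H_*({\mathbb{FL}}(A^{n+1}),\mathbb Z)$. (ii) The group $E(A)$ of elementary matrices acts trivially on $H_*({\mathbb{FL}}(A^\infty),\mathbb Z)$.
   Context: $A$ is an associative ring with unit such that $A^m\cong A^n$ implies $m=n$; modules are left modules. For a free module $V$ of rank $n$, $FL(V)$ is the set of full flags $0=F_0\subset F_1\subset\cdots\subset F_n=V$ with each $F_i/F_{i-1}$ free of rank one, and $SPL(V)$ the set of unordered sets $\alpha=\{L_1,\dots,L_n\}$ of free rank-one submodules with $\bigoplus L_i\to V$ an isomorphism. For $\alpha\in SPL(V)$, $[\alpha]\subset FL(V)$ is the set of $n!$ flags $(0,L_{\sigma(1)},L_{\sigma(1)}\oplus L_{\sigma(2)},\dots,V)$ obtained from orderings of $\alpha$. ${\mathbb{FL}}(V)$ is the simplicial complex with vertex set $FL(V)$ whose simplices are the nonempty subsets of the sets $[\alpha]$, $\alpha\in SPL(V)$; $GL(V)$ acts on it. The inclusion $i:{\mathbb{FL}}(A^n)\to{\mathbb{FL}}(A^{n+1})$ sends a flag $(F_0,\dots,F_n=A^n)$ to $(F_0,\dots,F_n,A^{n+1})$. $A^\infty$ is the free module of finitely supported sequences containing $A^n$ as the first $n$ coordinates; $FL(A^\infty)$ is the set of flags $0=V_0\subset V_1\subset\cdots$ with $V_i/V_{i-1}$ free of rank one and $V_n=A^n$ for all large $n$, and ${\mathbb{FL}}(A^\infty)$ is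 the union of the subcomplexes ${\mathbb{FL}}(A^n)$, with $GL(A)=\bigcup GL_n(A)$ acting. $E_n(A)\subset GL_n(A)$ is the subgroup generated by elementary matrices, $E(A)=\bigcup_n E_n(A)$. *)

theory Defs
  imports Main
begin

text \<open>Vectors are finitely supported sequences in A; A^n consists of those
supported in the first n coordinates, A^\<infinity> of all finitely supported ones.\<close>

type_synonym 'a vec = "nat \<Rightarrow> 'a"
type_synonym 'a flag = "nat \<Rightarrow> 'a vec set"

definition vzero :: "'a::ring_1 vec" where
  "vzero = (\<lambda>i. 0)"

definition vadd :: "'a::ring_1 vec \<Rightarrow> 'a vec \<Rightarrow> 'a vec" where
  "vadd v w = (\<lambda>i. v i + w i)"

definition smult :: "'a::ring_1 \<Rightarrow> 'a vec \<Rightarrow> 'a vec" where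
  "smult a v = (\<lambda>i. a * v i)"

definition An :: "nat \<Rightarrow> 'a::ring_1 vec set" where
  "An n = {v. \<forall>i\<ge>n. v i = 0}"

definition IBN :: "'a::ring_1 itself \<Rightarrow> bool" where
  "IBN _ \<longleftrightarrow> (\<forall>m n (f :: 'a vec \<Rightarrow> 'a vec).
      bij_betw f (An m) (An n)
      \<and> (\<forall>v\<in>An m. \<forall>w\<in>An m. f (vadd v w) = vadd (f v) (f w))
      \<and> (\<forall>a. \<forall>v\<in>An m. f (smult a v) = smult a (f v))
      \<longrightarrow> m = n)"

definition free_rank_one :: "'a::ring_1 vec set \<Rightarrow> bool" where
  "free_rank_one L \<longleftrightarrow> (\<exists>v. L = {smult a v | a. True} \<and> (\<forall>a. smult a v = vzero \<longrightarrow> a = 0))"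

definition quot_free_rank_one :: "'a::ring_1 vec set \<Rightarrow> 'a vec set \<Rightarrow> bool" where
  "quot_free_rank_one F' F \<longleftrightarrow> F \<subseteq> F' \<and>
     (\<exists>v\<in>F'. F' = {vadd x (smult a v) | x a. x \<in> F} \<and> (\<forall>a. smult a v \<in> F \<longrightarrow> a = 0))"

text \<open>A full flag 0 = F_0 \<subset> ... \<subset> F_n = A^n, encoded as a sequence with
F_k = A^n for all k \<ge> n (normalisation, so that flags are determined by F_0..F_n).\<close>
definition FL :: "nat \<Rightarrow> 'a::ring_1 flag set" where
  "FL n = {F. F 0 = {vzero} \<and> (\<forall>k\<ge>n. F k = An n)
              \<and> (\<forall>i<n. quot_free_rank_one (F (Suc i)) (F i))}"

text \<open>Splittings: unordered sets of n free rank-one submodules of A^n whose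
direct sum maps isomorphically onto A^n.\<close>
definition SPL :: "nat \<Rightarrow> 'a::ring_1 vec set set set" where
  "SPL n = {\<alpha>. finite \<alpha> \<and> card \<alpha> = n \<and> (\<forall>L\<in>\<alpha>. free_rank_one L \<and> L \<subseteq> An n)
     \<and> (\<forall>v\<in>An n. \<exists>!x. (\<forall>L\<in>\<alpha>. x L \<in> L) \<and> (\<forall>L. L \<notin> \<alpha> \<longrightarrow> x L = vzero)
                         \<and> v = (\<lambda>i. \<Sum>L\<in>\<alpha>. x L i))}"

definition psum :: "'a::ring_1 vec set list \<Rightarrow> nat \<Rightarrow> 'a vec set" where
  "psum Ls k = {(\<lambda>i. \<Sum>j<k. x j i) | x. \<forall>j<k. x j \<in> Ls ! j}"

definition flag_of :: "nat \<Rightarrow> 'a::ring_1 vec set list \<Rightarrow> 'a flag" where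
  "flag_of n Ls = (\<lambda>k. if k < n then psum Ls k else An n)"

definition bracket :: "nat \<Rightarrow> 'a::ring_1 vec set set \<Rightarrow> 'a flag set" where
  "bracket n \<alpha> = {flag_of n Ls | Ls. distinct Ls \<and> set Ls = \<alpha>}"

definition FLc :: "nat \<Rightarrow> 'a::ring_1 flag set set" where
  "FLc n = {S. S \<noteq> {} \<and> (\<exists>\<alpha>\<in>SPL n. S \<subseteq> bracket n \<alpha>)}"

definition incl :: "nat \<Rightarrow> 'a::ring_1 flag \<Rightarrow> 'a flag" where
  "incl n F = (\<lambda>k. if k \<le> n then F k else An (Suc n))"

text \<open>FL(A^n) viewed inside FL(A^\<infinity>): (F_0..F_n) \<mapsto> (F_0..F_n, A^(n+1), A^(n+2), ...).\<close>
definition ext_inf :: "nat \<Rightarrow> 'a::ring_1 flag \<Rightarrow> 'a flag" where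
  "ext_inf n F = (\<lambda>k. if k \<le> n then F k else An k)"

definition FLinf :: "'a::ring_1 flag set set" where
  "FLinf = {ext_inf n ` S | n S. S \<in> FLc n}"

text \<open>The elementary matrix e_ij(a) = 1 + a E_ij (i \<noteq> j) acting on row vectors
(right action, i.e. as a left-module automorphism): v \<mapsto> v + (v_i a) e_j.\<close>
definition elem :: "nat \<Rightarrow> nat \<Rightarrow> 'a::ring_1 \<Rightarrow> 'a vec \<Rightarrow> 'a vec" where
  "elem i j a v = v(j := v j + v i * a)"

text \<open>E_n(A): group generated by elementary matrices of size n (the generating
set is closed under inverses, e_ij(a)^-1 = e_ij(-a), so the generated monoid
is the generated group). As automorphisms of A^\<infinity> these act as g \<oplus> id.\<close>
inductive_set En :: "nat \<Rightarrow> ('a::ring_1 vec \<Rightarrow> 'a vec) set" for n where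
  En_id: "id \<in> En n"
| En_step: "\<lbrakk>g \<in> En n; i < n; j < n; i \<noteq> j\<rbrakk> \<Longrightarrow> elem i j a \<circ> g \<in> En n"

definition E_all :: "('a::ring_1 vec \<Rightarrow> 'a vec) set" where
  "E_all = (\<Union>n. En n)"

definition act :: "('a::ring_1 vec \<Rightarrow> 'a vec) \<Rightarrow> 'a flag \<Rightarrow> 'a flag" where
  "act g F = (\<lambda>k. g ` F k)"

definition osimplex :: "'v set set \<Rightarrow> nat \<Rightarrow> 'v list \<Rightarrow> bool" where
  "osimplex K q s \<longleftrightarrow> length s = Suc q \<and> set s \<in> K"

definition supp :: "('v list \<Rightarrow> int) \<Rightarrow> 'v list set" where
  "supp c = {s. c s \<noteq> 0}"

definition chain :: "'v set set \<Rightarrow> nat \<Rightarrow> ('v list \<Rightarrow> int) \<Rightarrow> bool" where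
  "chain K q c \<longleftrightarrow> finite (supp c) \<and> (\<forall>s\<in>supp c. osimplex K q s)"

definition del_at :: "nat \<Rightarrow> 'v list \<Rightarrow> 'v list" where
  "del_at i s = take i s @ drop (Suc i) s"

definition bd :: "('v list \<Rightarrow> int) \<Rightarrow> 'v list \<Rightarrow> int" where
  "bd c = (\<lambda>t. \<Sum>s\<in>supp c. \<Sum>i<length s. if del_at i s = t then (-1) ^ i * c s else 0)"

definition push :: "('v \<Rightarrow> 'w) \<Rightarrow> ('v list \<Rightarrow> int) \<Rightarrow> 'w list \<Rightarrow> int" where
  "push f c = (\<lambda>t. \<Sum>s\<in>{s\<in>supp c. map f s = t}. c s)"

definition cycle :: "'v set set \<Rightarrow> nat \<Rightarrow> ('v list \<Rightarrow> int) \<Rightarrow> bool" where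
  "cycle K q z \<longleftrightarrow> chain K q z \<and> (q = 0 \<or> (\<forall>t. bd z t = 0))"

text \<open>Two q-chains are homologous: their difference is a boundary. Thus the
classes of cycles z, w in H_q(K;Z) agree iff homologous K q z w.\<close>
definition homologous :: "'v set set \<Rightarrow> nat \<Rightarrow> ('v list \<Rightarrow> int) \<Rightarrow> ('v list \<Rightarrow> int) \<Rightarrow> bool" where
  "homologous K q z w \<longleftrightarrow> (\<exists>c. chain K (Suc q) c \<and> (\<forall>t. bd c t = z t - w t))"

end

theory Submission
  imports Defs
begin

text \<open>
  Write \<open>L\<^sub>n = A e\<^sub>n\<close>. For a flag \<open>F \<in> [\<alpha>]\<close> of \<open>A\<^sup>n\<close>, both \<open>i F = (F, A\<^sup>n\<^sup>+\<^sup>1)\<close> and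
  \<open>j F = (0, L\<^sub>n, L\<^sub>n + F\<^sub>1, \<dots>, L\<^sub>n + F\<^sub>n\<^sub>-\<^sub>1, A\<^sup>n\<^sup>+\<^sup>1)\<close> lie in \<open>[\<alpha> \<union> {L\<^sub>n}]\<close>, so the simplicial
  maps i and j are contiguous and hence induce chain-homotopic maps (prism operator).
  A row operation \<open>e\<^sub>n\<^sub>k(a)\<close> fixes every flag \<open>i F\<close> and a column operation \<open>e\<^sub>k\<^sub>n(a)\<close> fixes
  every flag \<open>j F\<close>; since both act simplicially on \<open>FL(A\<^sup>n\<^sup>+\<^sup>1)\<close>, they act trivially on
  the image of \<open>i\<^sub>*\<close>. The other generators \<open>e\<^sub>k\<^sub>l(a)\<close>, \<open>k, l < n\<close>, are commutators of row and
  column operations. For (ii), a cycle of \<open>FL(A\<^sup>\<infinity>)\<close> and an element of \<open>E(A)\<close> both live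
  at some finite stage, where (i) applies.
\<close>

section \<open>Ordered chains and their adjoints on cochains\<close>

definition delta :: "'v list \<Rightarrow> 'v list \<Rightarrow> int" where
  "delta t u = (if u = t then 1 else 0)"

definition pairing :: "('v list \<Rightarrow> int) \<Rightarrow> ('v list \<Rightarrow> int) \<Rightarrow> int" where
  "pairing c d = (\<Sum>s\<in>supp c. c s * d s)"

definition cobd :: "('v list \<Rightarrow> int) \<Rightarrow> 'v list \<Rightarrow> int" where
  "cobd d s = (\<Sum>k<length s. (-1) ^ k * d (del_at k s))"

lemma pairing_superset:
  assumes "finite A" "supp c \<subseteq> A"
  shows "pairing c d = (\<Sum>s\<in>A. c s * d s)"
  unfolding pairing_def by (rule sum.mono_neutral_left) (use assms in \<open>auto simp: supp_def\<close>)

lemma sum_delta_mult: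
  assumes "finite U" "x \<in> U"
  shows "(\<Sum>u\<in>U. delta u x * d u) = d x"
proof -
  have "(\<Sum>u\<in>U. delta u x * d u) = (\<Sum>u\<in>U. if x = u then d u else 0)"
    by (rule sum.cong) (auto simp: delta_def)
  then show ?thesis using assms by simp
qed

lemma pairing_delta: "finite (supp c) \<Longrightarrow> pairing c (delta t) = c t"
  by (cases "t \<in> supp c") (auto simp: pairing_def delta_def supp_def if_distrib cong: if_cong)

lemma chain_eqI:
  assumes "finite (supp c)" "finite (supp c')" "\<And>t. pairing c (delta t) = pairing c' (delta t)"
  shows "c = c'"
  using assms by (auto simp: pairing_delta)

text \<open>Each chain operation below sends a simplex s to a finite formal combination
  \<open>\<Sum>i\<in>J s. a s i \<cdot> [p s i]\<close>; its adjoint on cochains is then read off by pairing.\<close>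
lemma
  fixes c :: "'v list \<Rightarrow> int" and e :: "'w list \<Rightarrow> int"
  assumes fin: "finite (supp c)" "\<And>s. s \<in> supp c \<Longrightarrow> finite (J s)"
    and e: "\<And>t. e t = (\<Sum>s\<in>supp c. c s * (\<Sum>i\<in>J s. a s i * delta t (p s i)))"
  shows supp_linear_ext: "supp e \<subseteq> (\<Union>s\<in>supp c. p s ` J s)"
    and finite_supp_linear_ext: "finite (supp e)"
    and pairing_linear_ext: "pairing e d = pairing c (\<lambda>s. \<Sum>i\<in>J s. a s i * d (p s i))"
proof -
  define U where "U = (\<Union>s\<in>supp c. p s ` J s)"
  have U: "finite U" using fin by (simp add: U_def)
  have pU: "p s i \<in> U" if "s \<in> supp c" "i \<in> J s" for s i using that by (auto simp: U_def)
  have sub: "supp e \<subseteq> U"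
  proof
    fix t assume "t \<in> supp e"
    then have "e t \<noteq> 0" by (simp add: supp_def)
    then obtain s where "s \<in> supp c" and "c s * (\<Sum>i\<in>J s. a s i * delta t (p s i)) \<noteq> 0"
      unfolding e by (rule sum.not_neutral_contains_not_neutral)
    moreover from this(2) obtain i where "i \<in> J s" and "a s i * delta t (p s i) \<noteq> 0"
      by (auto elim: sum.not_neutral_contains_not_neutral)
    ultimately have "s \<in> supp c" "i \<in> J s" "p s i = t" by (auto simp: delta_def split: if_splits)
    then show "t \<in> U" unfolding U_def by blast
  qed
  then show "supp e \<subseteq> (\<Union>s\<in>supp c. p s ` J s)" by (simp add: U_def)
  show "finite (supp e)" using U sub finite_subset by blast
  have "pairing e d = (\<Sum>u\<in>U. e u * d u)" by (rule pairing_superset[OF U sub])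
  also have "\<dots> = (\<Sum>u\<in>U. \<Sum>s\<in>supp c. \<Sum>i\<in>J s. c s * a s i * (delta u (p s i) * d u))"
    unfolding e by (simp add: sum_distrib_left sum_distrib_right mult.assoc)
  also have "\<dots> = (\<Sum>s\<in>supp c. \<Sum>i\<in>J s. \<Sum>u\<in>U. c s * a s i * (delta u (p s i) * d u))"
    by (subst sum.swap) (simp add: sum.swap[of _ U])
  also have "\<dots> = (\<Sum>s\<in>supp c. \<Sum>i\<in>J s. c s * a s i * d (p s i))"
    by (intro sum.cong refl) (simp add: sum_delta_mult[OF U pU] flip: sum_distrib_left)
  also have "\<dots> = pairing c (\<lambda>s. \<Sum>i\<in>J s. a s i * d (p s i))"
    by (simp add: pairing_def sum_distrib_left mult.assoc)
  finally show "pairing e d = pairing c (\<lambda>s. \<Sum>i\<in>J s. a s i * d (p s i))" .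
qed

lemma bd_as_sum: "bd c t = (\<Sum>s\<in>supp c. c s * (\<Sum>i<length s. (-1) ^ i * delta t (del_at i s)))"
  unfolding bd_def delta_def by (auto simp: sum_distrib_left intro!: sum.cong)

lemma bd_eq_pairing: "bd c t = pairing c (cobd (delta t))"
  unfolding pairing_def cobd_def by (rule bd_as_sum)

lemma finite_supp_bd: "finite (supp c) \<Longrightarrow> finite (supp (bd c))"
  by (rule finite_supp_linear_ext[OF _ _ bd_as_sum]) auto

lemma pairing_bd: "finite (supp c) \<Longrightarrow> pairing (bd c) d = pairing c (cobd d)"
  unfolding cobd_def by (rule pairing_linear_ext[OF _ _ bd_as_sum]) auto

lemma push_as_sum: "finite (supp c) \<Longrightarrow> push f c t = (\<Sum>s\<in>supp c. c s * delta t (map f s))"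
  unfolding push_def delta_def by (simp add: sum.inter_filter if_distrib cong: if_cong)

lemma push_eq_pairing: "finite (supp c) \<Longrightarrow> push f c t = pairing c (\<lambda>s. delta t (map f s))"
  unfolding pairing_def by (rule push_as_sum)

lemma finite_supp_push: "finite (supp c) \<Longrightarrow> finite (supp (push f c))"
  by (rule finite_supp_linear_ext[where J="\<lambda>_. {()}" and a="\<lambda>_ _. 1"]) (simp_all add: push_as_sum)

lemma supp_push:
  assumes "finite (supp c)" shows "supp (push f c) \<subseteq> map f ` supp c"
proof -
  have "supp (push f c) \<subseteq> (\<Union>s\<in>supp c. (\<lambda>_. map f s) ` {()})"
    by (rule supp_linear_ext[where a="\<lambda>_ _. 1"]) (simp_all add: assms push_as_sum)
  then show ?thesis by auto
qed

lemma pairing_push: "finite (supp c) \<Longrightarrow> pairing (push f c) d = pairing c (\<lambda>s. d (map f s))"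
  by (rule pairing_linear_ext[where J="\<lambda>_. {()}" and a="\<lambda>_ _. 1", simplified])
    (simp_all add: push_as_sum)

lemma push_push: "finite (supp c) \<Longrightarrow> push g (push f c) = push (g \<circ> f) c"
  by (rule chain_eqI) (simp_all add: finite_supp_push pairing_push)

lemma push_id: "finite (supp c) \<Longrightarrow> push id c = c"
  by (rule chain_eqI) (simp_all add: finite_supp_push pairing_push)

lemma push_cong: "(\<And>s. s \<in> supp c \<Longrightarrow> map f s = map g s) \<Longrightarrow> push f c = push g c"
  unfolding push_def by (intro ext sum.cong) auto

lemma del_at_map: "del_at k (map f s) = map f (del_at k s)"
  by (simp add: del_at_def take_map drop_map)

lemma cobd_map: "cobd (\<lambda>u. d (map f u)) s = cobd d (map f s)"
  by (simp add: cobd_def del_at_map)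

lemma bd_push: "finite (supp c) \<Longrightarrow> bd (push f c) = push f (bd c)"
  by (rule chain_eqI)
    (simp_all add: finite_supp_push finite_supp_bd pairing_push pairing_bd flip: cobd_map)

lemma pairing_add:
  assumes "finite (supp a)" "finite (supp b)"
  shows "pairing (\<lambda>t. a t + b t) d = pairing a d + pairing b d"
proof -
  have "finite (supp a \<union> supp b)" using assms by simp
  moreover have "supp (\<lambda>t. a t + b t) \<subseteq> supp a \<union> supp b" by (auto simp: supp_def)
  ultimately show ?thesis
    by (simp add: pairing_superset[of "supp a \<union> supp b"] sum.distrib distrib_right)
qed

lemma pairing_uminus: "pairing (\<lambda>t. - a t) d = - pairing a d"
  by (simp add: pairing_def supp_def sum_negf)

lemma pairing_diff:
  assumes "finite (supp a)" "finite (supp b)"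
  shows "pairing (\<lambda>t. a t - b t) d = pairing a d - pairing b d"
  using pairing_add[of a "\<lambda>t. - b t" d] assms by (simp add: pairing_uminus supp_def)

lemma pairing_diff_right: "pairing c (\<lambda>s. d s - d' s) = pairing c d - pairing c d'"
  by (simp add: pairing_def right_diff_distrib sum_subtractf)

lemma chain_add: "chain K q a \<Longrightarrow> chain K q b \<Longrightarrow> chain K q (\<lambda>t. a t + b t)"
proof -
  have "supp (\<lambda>t. a t + b t) \<subseteq> supp a \<union> supp b" by (auto simp: supp_def)
  then show "chain K q a \<Longrightarrow> chain K q b \<Longrightarrow> chain K q (\<lambda>t. a t + b t)"
    unfolding chain_def by (auto intro: finite_subset)
qed

lemma chain_uminus: "chain K q a \<Longrightarrow> chain K q (\<lambda>t. - a t)"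
  by (simp add: chain_def supp_def)

lemma chain_push:
  assumes "chain K q c" "\<And>\<sigma>. \<sigma> \<in> K \<Longrightarrow> f ` \<sigma> \<in> K'"
  shows "chain K' q (push f c)"
proof -
  have "finite (supp c)" using assms(1) by (simp add: chain_def)
  then show ?thesis
    using assms supp_push by (fastforce simp: chain_def osimplex_def finite_supp_push)
qed

lemma homologous_refl: "homologous K q z z"
  unfolding homologous_def by (rule exI[of _ "\<lambda>_. 0"]) (simp add: chain_def supp_def bd_def)

lemma homologous_sym:
  assumes "homologous K q z w" shows "homologous K q w z"
proof -
  obtain c where "chain K (Suc q) c" "\<And>t. bd c t = z t - w t"
    using assms unfolding homologous_def by blast
  then show ?thesis
    unfolding homologous_def
    by (intro exI[of _ "\<lambda>t. - c t"]) (simp add: chain_uminus bd_eq_pairing pairing_uminus)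
qed

lemma homologous_trans:
  assumes "homologous K q x y" "homologous K q y z" shows "homologous K q x z"
proof -
  obtain c c' where c: "chain K (Suc q) c" "\<And>t. bd c t = x t - y t"
    and c': "chain K (Suc q) c'" "\<And>t. bd c' t = y t - z t"
    using assms unfolding homologous_def by blast
  then have "bd (\<lambda>t. c t + c' t) t = x t - z t" for t
    by (simp add: chain_def bd_eq_pairing pairing_add)
  then show ?thesis
    unfolding homologous_def using chain_add[OF c(1) c'(1)] by blast
qed

lemma push_diff:
  assumes "finite (supp a)" "finite (supp b)"
  shows "push f (\<lambda>t. a t - b t) t = push f a t - push f b t"
proof -
  have "supp (\<lambda>t. a t - b t) \<subseteq> supp a \<union> supp b" by (auto simp: supp_def)
  then have "finite (supp (\<lambda>t. a t - b t))" using assms finite_subset by blast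
  then show ?thesis using assms by (simp add: push_eq_pairing pairing_diff)
qed

lemma homologous_push:
  assumes "homologous K q w y" "finite (supp w)" "finite (supp y)"
    and "\<And>\<sigma>. \<sigma> \<in> K \<Longrightarrow> f ` \<sigma> \<in> K'"
  shows "homologous K' q (push f w) (push f y)"
proof -
  obtain c where c: "chain K (Suc q) c" and bdc: "bd c = (\<lambda>t. w t - y t)"
    using assms(1) unfolding homologous_def by fast
  have "finite (supp c)" using c by (simp add: chain_def)
  then have "bd (push f c) t = push f w t - push f y t" for t
    using assms(2,3) by (simp add: bd_push bdc push_diff)
  then show ?thesis
    unfolding homologous_def using chain_push[OF c assms(4)] by blast
qed

section \<open>Contiguous maps induce homologous chain maps\<close>

definition prism_simplex :: "('v \<Rightarrow> 'w) \<Rightarrow> ('v \<Rightarrow> 'w) \<Rightarrow> nat \<Rightarrow> 'v list \<Rightarrow> 'w list" where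
  "prism_simplex f h i s = map f (take (Suc i) s) @ map h (drop i s)"

definition prism_cochain :: "('v \<Rightarrow> 'w) \<Rightarrow> ('v \<Rightarrow> 'w) \<Rightarrow> ('w list \<Rightarrow> int) \<Rightarrow> 'v list \<Rightarrow> int" where
  "prism_cochain f h d s = (\<Sum>i<length s. (-1) ^ i * d (prism_simplex f h i s))"

definition prism_chain :: "('v \<Rightarrow> 'w) \<Rightarrow> ('v \<Rightarrow> 'w) \<Rightarrow> ('v list \<Rightarrow> int) \<Rightarrow> 'w list \<Rightarrow> int" where
  "prism_chain f h z t =
     (\<Sum>s\<in>supp z. z s * (\<Sum>i<length s. (-1) ^ i * delta t (prism_simplex f h i s)))"

lemma cobd_Cons: "cobd d (x # s) = d s - cobd (\<lambda>u. d (x # u)) s"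
  unfolding cobd_def del_at_def
  by (simp del: sum.lessThan_Suc add: sum.lessThan_Suc_shift sum_negf)

lemma cobd_diff: "cobd (\<lambda>u. a u - b u) s = cobd a s - cobd b s"
  by (simp add: cobd_def right_diff_distrib sum_subtractf)

lemma prism_cochain_Cons:
  "prism_cochain f h d (v # s) = d (f v # map h (v # s)) - prism_cochain f h (\<lambda>u. d (f v # u)) s"
  unfolding prism_cochain_def prism_simplex_def
  by (simp del: sum.lessThan_Suc add: sum.lessThan_Suc_shift sum_negf)

lemma prism_cochain_diff: "prism_cochain f h (\<lambda>u. a u - b u) s = prism_cochain f h a s - prism_cochain f h b s"
  by (simp add: prism_cochain_def right_diff_distrib sum_subtractf)

text \<open>The prism identity \<open>P\<delta> + \<delta>P = h\<^sup># - f\<^sup>#\<close>, dualised to cochains.\<close>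
lemma prism_cochain_homotopy:
  "prism_cochain f h (cobd d) s + cobd (prism_cochain f h d) s = d (map h s) - d (map f s)"
proof (induction s arbitrary: d)
  case Nil
  show ?case by (simp add: cobd_def prism_cochain_def)
next
  case (Cons v s)
  define d1 where "d1 = (\<lambda>u. d (f v # u))"
  define d2 where "d2 = (\<lambda>u. d (f v # h v # u))"
  have "(\<lambda>u. cobd d (f v # u)) = (\<lambda>u. d u - cobd d1 u)"
    by (simp add: cobd_Cons d1_def)
  then have P: "prism_cochain f h (cobd d) (v # s)
      = d (map h (v # s)) - (d1 (map h s) - cobd d2 (map h s))
        - (prism_cochain f h d s - prism_cochain f h (cobd d1) s)"
    by (simp add: prism_cochain_Cons prism_cochain_diff cobd_Cons d1_def d2_def)
  have "(\<lambda>u. prism_cochain f h d (v # u)) = (\<lambda>u. d2 (map h u) - prism_cochain f h d1 u)"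
    by (simp add: prism_cochain_Cons d1_def d2_def)
  then have C: "cobd (prism_cochain f h d) (v # s)
      = prism_cochain f h d s - (cobd d2 (map h s) - cobd (prism_cochain f h d1) s)"
    by (simp add: cobd_Cons cobd_diff flip: cobd_map)
  show ?case using Cons.IH[of d1] unfolding P C by (simp add: d1_def)
qed

lemma
  assumes "finite (supp z)"
  shows supp_prism_chain:
      "supp (prism_chain f h z) \<subseteq> (\<Union>s\<in>supp z. (\<lambda>i. prism_simplex f h i s) ` {..<length s})"
    and finite_supp_prism_chain: "finite (supp (prism_chain f h z))"
    and pairing_prism_chain: "pairing (prism_chain f h z) d = pairing z (prism_cochain f h d)"
  using supp_linear_ext[OF assms _ prism_chain_def] finite_supp_linear_ext[OF assms _ prism_chain_def]
    pairing_linear_ext[OF assms _ prism_chain_def]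
  by (simp_all add: prism_cochain_def[abs_def])

lemma bd_prism_chain:
  assumes fin: "finite (supp z)" and cyc: "\<And>t. t \<noteq> [] \<Longrightarrow> bd z t = 0"
  shows "bd (prism_chain f h z) t = push h z t - push f z t"
proof -
  have "pairing (bd z) (prism_cochain f h (delta t)) = 0"
    unfolding pairing_def
  proof (intro sum.neutral ballI)
    fix s show "bd z s * prism_cochain f h (delta t) s = 0"
      by (cases "s = []") (simp_all add: cyc prism_cochain_def)
  qed
  then have boundary_term: "pairing z (cobd (prism_cochain f h (delta t))) = 0"
    by (simp add: pairing_bd fin)
  have "bd (prism_chain f h z) t = pairing z (prism_cochain f h (cobd (delta t)))"
    by (simp add: bd_eq_pairing pairing_prism_chain fin)
  also have "\<dots> = pairing z (\<lambda>s. delta t (map h s) - delta t (map f s)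
                                - cobd (prism_cochain f h (delta t)) s)"
    by (rule arg_cong[where f="pairing z"], rule ext)
      (simp add: prism_cochain_homotopy[of f h "delta t", symmetric])
  also have "\<dots> = push h z t - push f z t"
    by (simp add: pairing_diff_right boundary_term push_eq_pairing fin)
  finally show ?thesis .
qed

lemma finite_supp_cycle: "cycle K q z \<Longrightarrow> finite (supp z)"
  by (simp add: cycle_def chain_def)

lemma set_in_cycle: "cycle K q z \<Longrightarrow> s \<in> supp z \<Longrightarrow> set s \<in> K"
  by (simp add: cycle_def chain_def osimplex_def)

lemma cycle_bd_eq_0:
  assumes "cycle K q z" "t \<noteq> []" shows "bd z t = 0"
proof (cases "q = 0")
  case True
  then have "\<forall>s\<in>supp z. length s = 1" using assms(1) by (simp add: cycle_def chain_def osimplex_def)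
  then show ?thesis unfolding bd_def using assms(2)
    by (intro sum.neutral ballI) (auto simp: del_at_def)
next
  case False
  then show ?thesis using assms(1) by (simp add: cycle_def)
qed

lemma set_prism_simplex: "set (prism_simplex f h i s) \<subseteq> f ` set s \<union> h ` set s"
  by (auto simp: prism_simplex_def dest: in_set_takeD in_set_dropD)

lemma homologous_push_contiguous:
  assumes z: "cycle K q z"
    and down: "\<And>\<sigma> \<tau>. \<sigma> \<in> K' \<Longrightarrow> \<tau> \<noteq> {} \<Longrightarrow> \<tau> \<subseteq> \<sigma> \<Longrightarrow> \<tau> \<in> K'"
    and contiguous: "\<And>\<sigma>. \<sigma> \<in> K \<Longrightarrow> f ` \<sigma> \<union> h ` \<sigma> \<in> K'"
  shows "homologous K' q (push h z) (push f z)"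
proof -
  have fin: "finite (supp z)" using z by (rule finite_supp_cycle)
  have "osimplex K' (Suc q) u" if "u \<in> supp (prism_chain f h z)" for u
  proof -
    obtain s i where s: "s \<in> supp z" "i < length s" and u: "u = prism_simplex f h i s"
      using \<open>u \<in> _\<close> supp_prism_chain[OF fin] by blast
    have "osimplex K q s" using s z by (simp add: cycle_def chain_def)
    then have "length u = Suc (Suc q)" "f ` set s \<union> h ` set s \<in> K'"
      using s u contiguous by (simp_all add: prism_simplex_def osimplex_def)
    then show ?thesis
      using down[of _ "set u"] set_prism_simplex u by (fastforce simp: osimplex_def)
  qed
  then have "chain K' (Suc q) (prism_chain f h z)"
    by (simp add: chain_def finite_supp_prism_chain[OF fin])
  moreover have "bd (prism_chain f h z) t = push h z t - push f z t" for t
    using bd_prism_chain[OF fin cycle_bd_eq_0[OF z]] .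
  ultimately show ?thesis unfolding homologous_def by blast
qed

section \<open>Splittings and flags\<close>

definition decomposition :: "'a::ring_1 vec set set \<Rightarrow> 'a vec \<Rightarrow> ('a vec set \<Rightarrow> 'a vec) \<Rightarrow> bool" where
  "decomposition \<alpha> v x \<longleftrightarrow>
     (\<forall>L\<in>\<alpha>. x L \<in> L) \<and> (\<forall>L. L \<notin> \<alpha> \<longrightarrow> x L = vzero) \<and> v = (\<lambda>i. \<Sum>L\<in>\<alpha>. x L i)"

lemma mem_SPL_iff:
  "\<alpha> \<in> SPL n \<longleftrightarrow> finite \<alpha> \<and> card \<alpha> = n \<and> (\<forall>L\<in>\<alpha>. free_rank_one L \<and> L \<subseteq> An n)
     \<and> (\<forall>v\<in>An n. \<exists>!x. decomposition \<alpha> v x)"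
  by (simp add: SPL_def decomposition_def)

definition unit_vec :: "nat \<Rightarrow> 'a::ring_1 vec" where
  "unit_vec n = (\<lambda>k. if k = n then 1 else 0)"

definition coord_line :: "nat \<Rightarrow> 'a::ring_1 vec set" where
  "coord_line n = {smult c (unit_vec n) | c. True}"

lemma An_mono: "m \<le> n \<Longrightarrow> An m \<subseteq> An n"
  by (auto simp: An_def)

lemma coord_line_subset_An: "coord_line n \<subseteq> An (Suc n)"
  by (auto simp: coord_line_def An_def smult_def unit_vec_def)

lemma unit_vec_in_coord_line: "unit_vec n \<in> coord_line n"
  unfolding coord_line_def by (rule CollectI, rule exI[of _ 1]) (simp add: smult_def)

lemma coord_line_not_subset_An: "\<not> coord_line n \<subseteq> (An n :: 'a::ring_1 vec set)"
proof
  assume "coord_line n \<subseteq> (An n :: 'a vec set)"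
  then have "unit_vec n \<in> (An n :: 'a vec set)" using unit_vec_in_coord_line by blast
  then have "unit_vec n n = (0::'a)" by (simp add: An_def)
  then show False by (simp add: unit_vec_def)
qed

lemma free_rank_one_coord_line: "free_rank_one (coord_line n)"
  unfolding free_rank_one_def coord_line_def
  by (rule exI[of _ "unit_vec n"]) (auto simp: smult_def vzero_def unit_vec_def fun_eq_iff)

lemma decomposition_insert_coord_line:
  assumes fin: "finite \<alpha>" and sub: "\<forall>L\<in>\<alpha>. L \<subseteq> An n" and notin: "coord_line n \<notin> \<alpha>"
  shows "decomposition (insert (coord_line n) \<alpha>) v x \<longleftrightarrow>
    x (coord_line n) = smult (v n) (unit_vec n) \<and> decomposition \<alpha> (v(n := 0)) (x(coord_line n := vzero))"
    (is "?lhs \<longleftrightarrow> ?rhs")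
proof -
  let ?L = "coord_line n :: 'a vec set"
  have sum_upd: "(\<Sum>L\<in>\<alpha>. (x(?L := vzero)) L i) = (\<Sum>L\<in>\<alpha>. x L i)" for i
    using notin by (auto intro!: sum.cong)
  have sum_insert: "(\<Sum>L\<in>insert ?L \<alpha>. x L i) = x ?L i + (\<Sum>L\<in>\<alpha>. (x(?L := vzero)) L i)" for i
    using fin notin by (simp add: sum_upd del: fun_upd_apply)
  have sum_n: "(\<Sum>L\<in>\<alpha>. x L n) = 0" if "\<forall>L\<in>\<alpha>. x L \<in> L"
    using that sub by (auto simp: An_def intro!: sum.neutral)
  show ?thesis
  proof
    assume lhs: ?lhs
    then obtain c where c: "x ?L = smult c (unit_vec n)"
      by (auto simp: decomposition_def coord_line_def)
    have v: "v i = x ?L i + (\<Sum>L\<in>\<alpha>. x L i)" for i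
      using lhs by (simp add: decomposition_def sum_insert sum_upd del: fun_upd_apply)
    have "(\<Sum>L\<in>\<alpha>. x L n) = 0"
      using lhs sum_n by (simp add: decomposition_def)
    then have "c = v n" using v[of n] c by (simp add: smult_def unit_vec_def)
    then have "x ?L = smult (v n) (unit_vec n)" using c by simp
    moreover have "(v(n := 0)) i = (\<Sum>L\<in>\<alpha>. x L i)" for i
      using v[of i] c \<open>(\<Sum>L\<in>\<alpha>. x L n) = 0\<close> by (simp add: smult_def unit_vec_def)
    ultimately show ?rhs
      unfolding decomposition_def sum_upd using lhs notin by (auto simp: decomposition_def fun_eq_iff)
  next
    assume rhs: ?rhs
    then have x: "x ?L = smult (v n) (unit_vec n)"
      and eq: "v(n := 0) = (\<lambda>i. \<Sum>L\<in>\<alpha>. x L i)"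
      unfolding decomposition_def sum_upd by blast+
    have "v i = x ?L i + (\<Sum>L\<in>\<alpha>. x L i)" for i
      using fun_cong[OF eq, of i] x by (cases "i = n") (simp_all add: smult_def unit_vec_def)
    then have "v = (\<lambda>i. \<Sum>L\<in>insert ?L \<alpha>. x L i)" using fin notin by (simp add: fun_eq_iff)
    moreover have "x ?L \<in> ?L" by (subst x) (auto simp: coord_line_def)
    ultimately show ?lhs using rhs by (auto simp: decomposition_def split: if_splits)
  qed
qed

lemma
  assumes "\<alpha> \<in> SPL n"
  shows coord_line_notin_SPL: "coord_line n \<notin> \<alpha>"
    and insert_coord_line_SPL: "insert (coord_line n) \<alpha> \<in> SPL (Suc n)"
proof -
  let ?L = "coord_line n :: 'a vec set"
  have fin: "finite \<alpha>" "card \<alpha> = n" and mem: "\<forall>L\<in>\<alpha>. free_rank_one L \<and> L \<subseteq> An n"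
    and dec: "\<forall>v\<in>An n. \<exists>!x. decomposition \<alpha> v x"
    using assms by (simp_all add: mem_SPL_iff)
  show notin: "?L \<notin> \<alpha>" using mem coord_line_not_subset_An by blast
  note dec_insert = decomposition_insert_coord_line[OF fin(1) _ notin]
  have "\<exists>!x. decomposition (insert ?L \<alpha>) v x" if "v \<in> An (Suc n)" for v
  proof -
    have "v(n := 0) \<in> An n" using that by (auto simp: An_def)
    then obtain x0 where x0: "decomposition \<alpha> (v(n := 0)) x0"
      and uniq: "\<And>y. decomposition \<alpha> (v(n := 0)) y \<Longrightarrow> y = x0"
      using dec by metis
    have "x0 ?L = vzero" using x0 notin by (simp add: decomposition_def)
    then have x0_upd: "x0(?L := vzero) = x0" by auto
    show ?thesis
    proof (rule ex1I[of _ "x0(?L := smult (v n) (unit_vec n))"])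
      show "decomposition (insert ?L \<alpha>) v (x0(?L := smult (v n) (unit_vec n)))"
        using x0 mem by (simp add: dec_insert x0_upd)
    next
      fix y assume "decomposition (insert ?L \<alpha>) v y"
      then have "y ?L = smult (v n) (unit_vec n)" "y(?L := vzero) = x0"
        using mem uniq by (simp_all add: dec_insert)
      then show "y = x0(?L := smult (v n) (unit_vec n))" by auto
    qed
  qed
  then show "insert ?L \<alpha> \<in> SPL (Suc n)"
    using fin mem notin An_mono[of n "Suc n"]
    by (auto simp: mem_SPL_iff free_rank_one_coord_line coord_line_subset_An) blast
qed

definition line_sum :: "'a::ring_1 vec set \<Rightarrow> 'a vec set \<Rightarrow> 'a vec set" where
  "line_sum L X = {vadd l x | l x. l \<in> L \<and> x \<in> X}"

lemma psum_0: "psum Ls 0 = {vzero}"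
  by (auto simp: psum_def vzero_def)

lemma psum_Cons_Suc: "psum (L # Ls) (Suc k) = line_sum L (psum Ls k)"
proof
  show "psum (L # Ls) (Suc k) \<subseteq> line_sum L (psum Ls k)"
  proof
    fix u assume "u \<in> psum (L # Ls) (Suc k)"
    then obtain x where x: "u = (\<lambda>i. \<Sum>j<Suc k. x j i)" "\<forall>j<Suc k. x j \<in> (L # Ls) ! j"
      unfolding psum_def by blast
    have "u = vadd (x 0) (\<lambda>i. \<Sum>j<k. x (Suc j) i)"
      unfolding x(1) vadd_def by (simp only: sum.lessThan_Suc_shift)
    moreover have "(\<lambda>i. \<Sum>j<k. x (Suc j) i) \<in> psum Ls k"
      unfolding psum_def using x(2) by (auto intro!: exI[of _ "\<lambda>j. x (Suc j)"])
    ultimately show "u \<in> line_sum L (psum Ls k)" using x(2) unfolding line_sum_def by force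
  qed
  show "line_sum L (psum Ls k) \<subseteq> psum (L # Ls) (Suc k)"
  proof
    fix u assume "u \<in> line_sum L (psum Ls k)"
    then obtain l x where lx: "u = vadd l (\<lambda>i. \<Sum>j<k. x j i)" "l \<in> L" "\<forall>j<k. x j \<in> Ls ! j"
      unfolding line_sum_def psum_def by blast
    have "u = (\<lambda>i. \<Sum>j<Suc k. case_nat l x j i)"
      unfolding lx(1) vadd_def by (simp only: sum.lessThan_Suc_shift nat.case)
    moreover have "\<forall>j<Suc k. case_nat l x j \<in> (L # Ls) ! j"
      using lx(2,3) by (auto split: nat.split)
    ultimately show "u \<in> psum (L # Ls) (Suc k)" unfolding psum_def by blast
  qed
qed

lemma psum_cong: "(\<And>j. j < k \<Longrightarrow> Ls ! j = Ms ! j) \<Longrightarrow> psum Ls k = psum Ms k"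
  unfolding psum_def by auto

lemma psum_subset_An: "(\<And>j. j < k \<Longrightarrow> Ls ! j \<subseteq> An n) \<Longrightarrow> psum Ls k \<subseteq> An n"
  unfolding psum_def An_def by (auto intro!: sum.neutral)

lemma length_SPL_ordering: "\<alpha> \<in> SPL n \<Longrightarrow> distinct Ls \<Longrightarrow> set Ls = \<alpha> \<Longrightarrow> length Ls = n"
  by (metis distinct_card mem_SPL_iff)

lemma psum_SPL_ordering:
  assumes \<alpha>: "\<alpha> \<in> SPL n" and Ls: "distinct Ls" "set Ls = \<alpha>"
  shows "psum Ls n = An n"
proof
  have len: "length Ls = n" by (rule length_SPL_ordering[OF \<alpha> Ls])
  then show "psum Ls n \<subseteq> An n"
    using \<alpha> Ls by (intro psum_subset_An) (auto simp: mem_SPL_iff)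
  show "An n \<subseteq> psum Ls n"
  proof
    fix v :: "'a vec" assume "v \<in> An n"
    then obtain x where x: "\<forall>L\<in>\<alpha>. x L \<in> L" "v = (\<lambda>i. \<Sum>L\<in>\<alpha>. x L i)"
      using \<alpha> by (auto simp: mem_SPL_iff decomposition_def)
    have "bij_betw ((!) Ls) {..<n} \<alpha>" by (rule bij_betw_nth) (use Ls len in auto)
    then have "v = (\<lambda>i. \<Sum>j<n. x (Ls ! j) i)"
      unfolding x(2) by (intro ext) (rule sum.reindex_bij_betw[symmetric])
    moreover have "\<forall>j<n. x (Ls ! j) \<in> Ls ! j" using x(1) Ls len by auto
    ultimately show "v \<in> psum Ls n" unfolding psum_def by (auto intro!: exI[of _ "\<lambda>j. x (Ls ! j)"])
  qed
qed

lemma FLc_vertexE: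
  assumes "\<sigma> \<in> FLc n" "F \<in> \<sigma>"
  obtains \<alpha> Ls where "\<alpha> \<in> SPL n" "distinct Ls" "set Ls = \<alpha>" "length Ls = n" "F = flag_of n Ls"
  using assms length_SPL_ordering unfolding FLc_def bracket_def by blast

lemma FLc_subset: "\<sigma> \<in> FLc n \<Longrightarrow> \<tau> \<noteq> {} \<Longrightarrow> \<tau> \<subseteq> \<sigma> \<Longrightarrow> \<tau> \<in> FLc n"
  unfolding FLc_def by blast

lemma incl_flag_of:
  assumes "\<alpha> \<in> SPL n" "distinct Ls" "set Ls = \<alpha>"
  shows "incl n (flag_of n Ls) = flag_of (Suc n) (Ls @ [coord_line n])"
proof
  fix k
  have len: "length Ls = n" by (rule length_SPL_ordering[OF assms])
  have "psum (Ls @ [coord_line n]) j = psum Ls j" if "j \<le> n" for j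
    by (rule psum_cong) (use that len in \<open>auto simp: nth_append\<close>)
  then show "incl n (flag_of n Ls) k = flag_of (Suc n) (Ls @ [coord_line n]) k"
    using psum_SPL_ordering[OF assms]
    by (cases "k < n"; cases "k = n") (simp_all add: incl_def flag_of_def)
qed

definition prepend_line :: "nat \<Rightarrow> 'a::ring_1 flag \<Rightarrow> 'a flag" where
  "prepend_line n F = (\<lambda>k. if k = 0 then {vzero}
     else if k \<le> n then line_sum (coord_line n) (F (k - 1)) else An (Suc n))"

lemma prepend_line_flag_of:
  assumes "length Ls = n"
  shows "prepend_line n (flag_of n Ls) = flag_of (Suc n) (coord_line n # Ls)"
proof
  fix k show "prepend_line n (flag_of n Ls) k = flag_of (Suc n) (coord_line n # Ls) k"
    using assms by (cases k) (simp_all add: prepend_line_def flag_of_def psum_0 psum_Cons_Suc)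
qed

lemma incl_prepend_line_FLc:
  assumes "\<sigma> \<in> FLc n"
  shows "incl n ` \<sigma> \<union> prepend_line n ` \<sigma> \<in> FLc (Suc n)"
proof -
  obtain \<alpha> where \<alpha>: "\<alpha> \<in> SPL n" and ne: "\<sigma> \<noteq> {}" and sub: "\<sigma> \<subseteq> bracket n \<alpha>"
    using assms unfolding FLc_def by blast
  have "incl n F \<in> bracket (Suc n) (insert (coord_line n) \<alpha>)"
       "prepend_line n F \<in> bracket (Suc n) (insert (coord_line n) \<alpha>)" if "F \<in> \<sigma>" for F
  proof -
    obtain Ls where Ls: "distinct Ls" "set Ls = \<alpha>" "F = flag_of n Ls"
      using \<open>F \<in> \<sigma>\<close> sub unfolding bracket_def by blast
    have "coord_line n \<notin> set Ls" using coord_line_notin_SPL[OF \<alpha>] Ls by simp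
    then have "distinct (Ls @ [coord_line n])" "distinct (coord_line n # Ls)"
      and "set (Ls @ [coord_line n]) = insert (coord_line n) \<alpha>" "set (coord_line n # Ls) = insert (coord_line n) \<alpha>"
      using Ls by auto
    moreover have "incl n F = flag_of (Suc n) (Ls @ [coord_line n])"
      using incl_flag_of[OF \<alpha> Ls(1,2)] Ls(3) by simp
    moreover have "prepend_line n F = flag_of (Suc n) (coord_line n # Ls)"
      using prepend_line_flag_of[OF length_SPL_ordering[OF \<alpha> Ls(1,2)]] Ls(3) by simp
    ultimately show "incl n F \<in> bracket (Suc n) (insert (coord_line n) \<alpha>)"
                    "prepend_line n F \<in> bracket (Suc n) (insert (coord_line n) \<alpha>)"
      unfolding bracket_def by blast+
  qed
  then show ?thesis
    using ne insert_coord_line_SPL[OF \<alpha>] unfolding FLc_def by blast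
qed

lemma incl_FLc: "\<sigma> \<in> FLc n \<Longrightarrow> incl n ` \<sigma> \<in> FLc (Suc n)"
  by (rule FLc_subset[OF incl_prepend_line_FLc]) (auto simp: FLc_def)

section \<open>Linear automorphisms act on \<open>FL(A\<^sup>m)\<close>\<close>

definition vec_linear :: "('a::ring_1 vec \<Rightarrow> 'a vec) \<Rightarrow> bool" where
  "vec_linear \<phi> \<longleftrightarrow> (\<forall>v w. \<phi> (vadd v w) = vadd (\<phi> v) (\<phi> w)) \<and> (\<forall>c v. \<phi> (smult c v) = smult c (\<phi> v))"

lemma vec_linear_vzero:
  assumes "vec_linear \<phi>" shows "\<phi> vzero = vzero"
proof -
  have "\<phi> vzero = \<phi> (smult 0 vzero)" by (simp add: smult_def vzero_def)
  also have "\<dots> = smult 0 (\<phi> vzero)" using assms by (simp add: vec_linear_def)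
  also have "\<dots> = vzero" by (simp add: smult_def vzero_def)
  finally show ?thesis .
qed

lemma vec_linear_sum:
  assumes "vec_linear \<phi>" "finite A"
  shows "\<phi> (\<lambda>i. \<Sum>L\<in>A. y L i) = (\<lambda>i. \<Sum>L\<in>A. \<phi> (y L) i)"
  using assms(2)
proof (induction A rule: finite_induct)
  case empty
  then show ?case using vec_linear_vzero[OF assms(1)] by (simp add: vzero_def)
next
  case (insert L A)
  then have "(\<lambda>i. \<Sum>L\<in>insert L A. y L i) = vadd (y L) (\<lambda>i. \<Sum>L\<in>A. y L i)"
    by (simp add: vadd_def)
  then show ?case using insert assms(1) by (simp add: vec_linear_def vadd_def)
qed

lemma ex1_bij_iff:
  assumes "\<And>x. S (T x) = x" "\<And>y. T (S y) = y"
  shows "(\<exists>!x. P (T x)) \<longleftrightarrow> (\<exists>!y. P y)"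
proof
  assume "\<exists>!x. P (T x)"
  then obtain x where "P (T x)" "\<And>x'. P (T x') \<Longrightarrow> x' = x" by blast
  then show "\<exists>!y. P y" using assms by (metis ex1I)
next
  assume "\<exists>!y. P y"
  then obtain y where "P y" "\<And>y'. P y' \<Longrightarrow> y' = y" by blast
  then show "\<exists>!x. P (T x)" using assms by (metis ex1I)
qed

locale vec_automorphism =
  fixes m :: nat and \<phi> \<psi> :: "'a::ring_1 vec \<Rightarrow> 'a vec"
  assumes linear: "vec_linear \<phi>" "vec_linear \<psi>"
    and inverse: "\<And>v. \<psi> (\<phi> v) = v" "\<And>v. \<phi> (\<psi> v) = v"
    and maps_An: "\<phi> ` An m \<subseteq> An m" "\<psi> ` An m \<subseteq> An m"
begin

lemma image_inverse: "\<psi> ` \<phi> ` X = X" "\<phi> ` \<psi> ` X = X"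
  by (simp_all add: image_comp inverse comp_def)

lemma image_An: "\<phi> ` An m = An m"
proof
  show "An m \<subseteq> \<phi> ` An m"
    using image_mono[OF maps_An(2), of \<phi>] image_inverse(2)[of "An m"] by simp
qed (rule maps_An(1))

lemma mem_image_iff: "u \<in> \<phi> ` L \<longleftrightarrow> \<psi> u \<in> L"
proof
  assume "\<psi> u \<in> L"
  then have "\<phi> (\<psi> u) \<in> \<phi> ` L" by (rule imageI)
  then show "u \<in> \<phi> ` L" by (simp add: inverse)
qed (auto simp: inverse)

lemma mem_image_image_iff: "L' \<in> image \<phi> ` \<alpha> \<longleftrightarrow> \<psi> ` L' \<in> \<alpha>"
proof
  assume "\<psi> ` L' \<in> \<alpha>"
  then have "\<phi> ` \<psi> ` L' \<in> image \<phi> ` \<alpha>" by (rule imageI)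
  then show "L' \<in> image \<phi> ` \<alpha>" by (simp add: image_inverse)
qed (auto simp: image_inverse)

lemma vzero_iff: "\<psi> u = vzero \<longleftrightarrow> u = vzero"
  using inverse(2)[of u] vec_linear_vzero[OF linear(1)] vec_linear_vzero[OF linear(2)] by auto

lemma free_rank_one_image:
  assumes "free_rank_one L" shows "free_rank_one (\<phi> ` L)"
proof -
  obtain v where L: "L = {smult a v | a. True}" and free: "\<forall>a. smult a v = vzero \<longrightarrow> a = 0"
    using assms unfolding free_rank_one_def by blast
  have "\<phi> ` L = (\<lambda>a. \<phi> (smult a v)) ` UNIV" unfolding L by auto
  also have "\<dots> = {smult a (\<phi> v) | a. True}" using linear(1) by (auto simp: vec_linear_def)
  finally have "\<phi> ` L = {smult a (\<phi> v) | a. True}" .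
  moreover have "\<psi> (smult a (\<phi> v)) = smult a v" for a
    using linear(2) by (simp add: vec_linear_def inverse)
  then have "\<forall>a. smult a (\<phi> v) = vzero \<longrightarrow> a = 0"
    using free vzero_iff by metis
  ultimately show ?thesis unfolding free_rank_one_def by blast
qed

lemma inj_on_image: "inj_on (image \<phi>) A"
  by (rule inj_on_inverseI[where g="image \<psi>"]) (simp add: image_inverse)

lemma decomposition_image:
  assumes "finite \<alpha>"
  shows "decomposition (image \<phi> ` \<alpha>) v x \<longleftrightarrow> decomposition \<alpha> (\<psi> v) (\<lambda>L. \<psi> (x (\<phi> ` L)))"
proof -
  have "(\<lambda>i. \<Sum>L'\<in>image \<phi> ` \<alpha>. x L' i) = (\<lambda>i. \<Sum>L\<in>\<alpha>. x (\<phi> ` L) i)"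
    by (simp add: sum.reindex inj_on_image)
  moreover have "v = w \<longleftrightarrow> \<psi> v = \<psi> w" for w using inverse(2) by metis
  ultimately have sums: "v = (\<lambda>i. \<Sum>L'\<in>image \<phi> ` \<alpha>. x L' i) \<longleftrightarrow>
      \<psi> v = (\<lambda>i. \<Sum>L\<in>\<alpha>. \<psi> (x (\<phi> ` L)) i)"
    by (simp add: vec_linear_sum[OF linear(2) assms])
  have outside: "(\<forall>L'. L' \<notin> image \<phi> ` \<alpha> \<longrightarrow> x L' = vzero) \<longleftrightarrow>
      (\<forall>L. L \<notin> \<alpha> \<longrightarrow> x (\<phi> ` L) = vzero)"
    by (metis image_inverse mem_image_image_iff)
  show ?thesis
    unfolding decomposition_def sums outside by (simp add: mem_image_iff vzero_iff)
qed

lemma SPL_image: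
  assumes "\<alpha> \<in> SPL m" shows "image \<phi> ` \<alpha> \<in> SPL m"
proof -
  have fin: "finite \<alpha>" and mem: "\<forall>L\<in>\<alpha>. free_rank_one L \<and> L \<subseteq> An m"
    and dec: "\<forall>v\<in>An m. \<exists>!x. decomposition \<alpha> v x"
    using assms by (simp_all add: mem_SPL_iff)
  have "\<exists>!x. decomposition (image \<phi> ` \<alpha>) v x" if "v \<in> An m" for v
  proof -
    have "\<psi> v \<in> An m" using that maps_An(2) by blast
    then have "\<exists>!y. decomposition \<alpha> (\<psi> v) y" using dec by blast
    then show ?thesis unfolding decomposition_image[OF fin]
      by (subst ex1_bij_iff[where S="\<lambda>y L'. \<phi> (y (\<psi> ` L'))"]) (simp_all add: inverse image_inverse)
  qed
  moreover have "\<phi> ` L \<subseteq> An m" if "L \<subseteq> An m" for L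
    using that maps_An(1) by blast
  ultimately show ?thesis
    using assms mem by (simp add: mem_SPL_iff card_image inj_on_image free_rank_one_image)
qed

lemma psum_image:
  assumes k: "k \<le> length Ls"
  shows "\<phi> ` psum Ls k = psum (map (image \<phi>) Ls) k"
proof -
  have sum: "\<phi> (\<lambda>i. \<Sum>j<k. x j i) = (\<lambda>i. \<Sum>j<k. \<phi> (x j) i)" for x
    by (rule vec_linear_sum[OF linear(1)]) simp
  have mem: "(\<forall>j<k. x j \<in> Ls ! j) \<longleftrightarrow> (\<forall>j<k. \<phi> (x j) \<in> map (image \<phi>) Ls ! j)" for x
    using k by (auto simp: mem_image_iff inverse)
  show ?thesis
  proof
    show "\<phi> ` psum Ls k \<subseteq> psum (map (image \<phi>) Ls) k"
    proof
      fix u assume "u \<in> \<phi> ` psum Ls k"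
      then obtain x where x: "u = \<phi> (\<lambda>i. \<Sum>j<k. x j i)" "\<forall>j<k. x j \<in> Ls ! j"
        unfolding psum_def by blast
      then have "u = (\<lambda>i. \<Sum>j<k. \<phi> (x j) i)" "\<forall>j<k. \<phi> (x j) \<in> map (image \<phi>) Ls ! j"
        using sum mem by simp_all
      then show "u \<in> psum (map (image \<phi>) Ls) k"
        unfolding psum_def by (auto intro!: exI[of _ "\<lambda>j. \<phi> (x j)"])
    qed
    show "psum (map (image \<phi>) Ls) k \<subseteq> \<phi> ` psum Ls k"
    proof
      fix u assume "u \<in> psum (map (image \<phi>) Ls) k"
      then obtain y where y: "u = (\<lambda>i. \<Sum>j<k. y j i)" "\<forall>j<k. y j \<in> map (image \<phi>) Ls ! j"
        unfolding psum_def by blast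
      have "u = \<phi> (\<lambda>i. \<Sum>j<k. \<psi> (y j) i)" unfolding y(1) sum by (simp add: inverse)
      moreover have "\<forall>j<k. \<psi> (y j) \<in> Ls ! j" using y(2) mem[of "\<lambda>j. \<psi> (y j)"] by (simp add: inverse)
      ultimately show "u \<in> \<phi> ` psum Ls k"
        unfolding psum_def by (auto intro!: exI[of _ "\<lambda>j. \<psi> (y j)"])
    qed
  qed
qed

lemma act_flag_of:
  "length Ls = m \<Longrightarrow> act \<phi> (flag_of m Ls) = flag_of m (map (image \<phi>) Ls)"
  unfolding act_def flag_of_def by (auto simp: fun_eq_iff psum_image image_An)

lemma act_FLc:
  assumes "\<sigma> \<in> FLc m" shows "act \<phi> ` \<sigma> \<in> FLc m"
proof -
  obtain \<alpha> where \<alpha>: "\<alpha> \<in> SPL m" and ne: "\<sigma> \<noteq> {}" and sub: "\<sigma> \<subseteq> bracket m \<alpha>"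
    using assms unfolding FLc_def by blast
  have "act \<phi> F \<in> bracket m (image \<phi> ` \<alpha>)" if "F \<in> \<sigma>" for F
  proof -
    obtain Ls where Ls: "distinct Ls" "set Ls = \<alpha>" "F = flag_of m Ls"
      using \<open>F \<in> \<sigma>\<close> sub unfolding bracket_def by blast
    then have "act \<phi> F = flag_of m (map (image \<phi>) Ls)"
      using act_flag_of length_SPL_ordering[OF \<alpha> Ls(1,2)] by simp
    moreover have "distinct (map (image \<phi>) Ls)" "set (map (image \<phi>) Ls) = image \<phi> ` \<alpha>"
      using Ls by (simp_all add: distinct_map inj_on_image)
    ultimately show ?thesis unfolding bracket_def by blast
  qed
  then show ?thesis using ne SPL_image[OF \<alpha>] unfolding FLc_def by blast
qed

end

lemma vec_linear_elem: "vec_linear (elem i j a)"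
  by (auto simp: vec_linear_def elem_def vadd_def smult_def fun_eq_iff algebra_simps)

lemma elem_neg_elem: "i \<noteq> j \<Longrightarrow> elem i j (- a) (elem i j a v) = v"
  by (auto simp: elem_def fun_eq_iff)

lemma elem_An_subset: "j < m \<Longrightarrow> elem i j a ` An m \<subseteq> An m"
  by (auto simp: elem_def An_def)

lemma vec_automorphism_elem:
  "j < m \<Longrightarrow> i \<noteq> j \<Longrightarrow> vec_automorphism m (elem i j a) (elem i j (- a))"
  using elem_neg_elem[of i j a] elem_neg_elem[of i j "- a"]
  by unfold_locales (simp_all add: vec_linear_elem elem_An_subset)

lemma act_elem_FLc: "j < m \<Longrightarrow> i \<noteq> j \<Longrightarrow> \<sigma> \<in> FLc m \<Longrightarrow> act (elem i j a) ` \<sigma> \<in> FLc m"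
  by (rule vec_automorphism.act_FLc[OF vec_automorphism_elem])

lemma elem_image_An: "j < m \<Longrightarrow> i \<noteq> j \<Longrightarrow> elem i j a ` An m = An m"
  by (rule vec_automorphism.image_An[OF vec_automorphism_elem])

section \<open>Elementary matrices act trivially on the image of \<open>FL(A\<^sup>n)\<close>\<close>

lemma act_comp: "act (g \<circ> h) = act g \<circ> act h"
  by (simp add: act_def fun_eq_iff image_comp)

lemma act_id: "act id = id"
  by (simp add: act_def fun_eq_iff)

definition fixes_incl_homology :: "nat \<Rightarrow> ('a::ring_1 vec \<Rightarrow> 'a vec) \<Rightarrow> bool" where
  "fixes_incl_homology n g \<longleftrightarrow> (\<forall>q z. cycle (FLc n) q z \<longrightarrow>
     homologous (FLc (Suc n)) q (push (act g \<circ> incl n) z) (push (incl n) z))"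

lemma fixes_incl_homology_id: "fixes_incl_homology n id"
  by (simp add: fixes_incl_homology_def act_id homologous_refl)

lemma fixes_incl_homology_comp:
  fixes g h :: "'a::ring_1 vec \<Rightarrow> 'a vec"
  assumes g: "fixes_incl_homology n g" "\<And>\<sigma>. \<sigma> \<in> FLc (Suc n) \<Longrightarrow> act g ` \<sigma> \<in> FLc (Suc n)"
    and h: "fixes_incl_homology n h"
  shows "fixes_incl_homology n (g \<circ> h)"
  unfolding fixes_incl_homology_def
proof (intro allI impI)
  fix q and z :: "'a flag list \<Rightarrow> int" assume z: "cycle (FLc n) q z"
  then have fin: "finite (supp z)" by (rule finite_supp_cycle)
  have "homologous (FLc (Suc n)) q (push (act h \<circ> incl n) z) (push (incl n) z)"
    using h z unfolding fixes_incl_homology_def by blast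
  then have "homologous (FLc (Suc n)) q (push (act g) (push (act h \<circ> incl n) z)) (push (act g) (push (incl n) z))"
    by (rule homologous_push) (simp_all add: g(2) finite_supp_push fin)
  then have "homologous (FLc (Suc n)) q (push (act (g \<circ> h) \<circ> incl n) z) (push (act g \<circ> incl n) z)"
    by (simp add: push_push fin act_comp comp_assoc)
  moreover have "homologous (FLc (Suc n)) q (push (act g \<circ> incl n) z) (push (incl n) z)"
    using g(1) z by (simp add: fixes_incl_homology_def)
  ultimately show "homologous (FLc (Suc n)) q (push (act (g \<circ> h) \<circ> incl n) z) (push (incl n) z)"
    by (rule homologous_trans)
qed

lemma push_eq_on_vertices:
  assumes "cycle K q z" "\<And>\<sigma> F. \<sigma> \<in> K \<Longrightarrow> F \<in> \<sigma> \<Longrightarrow> f F = h F"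
  shows "push f z = push h z"
  using assms by (intro push_cong map_cong) (auto dest: set_in_cycle)

lemma fixes_incl_homology_if_fixes_incl:
  fixes g :: "'a::ring_1 vec \<Rightarrow> 'a vec"
  assumes "\<And>\<sigma> F. \<sigma> \<in> FLc n \<Longrightarrow> F \<in> \<sigma> \<Longrightarrow> act g (incl n F) = incl n F"
  shows "fixes_incl_homology n g"
  unfolding fixes_incl_homology_def
  using push_eq_on_vertices[where f="act g \<circ> incl n" and h="incl n"] assms
  by (simp add: homologous_refl)

lemma fixes_incl_homology_if_fixes_prepend_line:
  fixes g :: "'a::ring_1 vec \<Rightarrow> 'a vec"
  assumes g: "\<And>\<sigma>. \<sigma> \<in> FLc (Suc n) \<Longrightarrow> act g ` \<sigma> \<in> FLc (Suc n)"
    and fixed: "\<And>\<sigma> F. \<sigma> \<in> FLc n \<Longrightarrow> F \<in> \<sigma> \<Longrightarrow> act g (prepend_line n F) = prepend_line n F"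
  shows "fixes_incl_homology n g"
  unfolding fixes_incl_homology_def
proof (intro allI impI)
  fix q and z :: "'a flag list \<Rightarrow> int" assume z: "cycle (FLc n) q z"
  have contiguous: "(act g \<circ> incl n) ` \<sigma> \<union> (act g \<circ> prepend_line n) ` \<sigma> \<in> FLc (Suc n)"
    if "\<sigma> \<in> FLc n" for \<sigma>
    using g[OF incl_prepend_line_FLc[OF that]] by (simp add: image_Un image_comp)
  have "homologous (FLc (Suc n)) q (push (act g \<circ> prepend_line n) z) (push (act g \<circ> incl n) z)"
    by (rule homologous_push_contiguous[OF z], erule (2) FLc_subset, erule contiguous)
  moreover have "push (act g \<circ> prepend_line n) z = push (prepend_line n) z"
    using z fixed by (intro push_eq_on_vertices) auto
  ultimately have "homologous (FLc (Suc n)) q (push (act g \<circ> incl n) z) (push (prepend_line n) z)"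
    by (simp add: homologous_sym)
  moreover have "homologous (FLc (Suc n)) q (push (prepend_line n) z) (push (incl n) z)"
    by (rule homologous_push_contiguous[OF z], erule (2) FLc_subset, rule incl_prepend_line_FLc)
  ultimately show "homologous (FLc (Suc n)) q (push (act g \<circ> incl n) z) (push (incl n) z)"
    by (rule homologous_trans)
qed

lemma flag_subset_An: "\<sigma> \<in> FLc n \<Longrightarrow> F \<in> \<sigma> \<Longrightarrow> F k \<subseteq> An n"
  by (erule (1) FLc_vertexE)
    (auto simp: flag_of_def mem_SPL_iff intro!: psum_subset_An dest: nth_mem)

lemma elem_fixes_An: "v \<in> An n \<Longrightarrow> elem n j a v = v"
  by (simp add: elem_def An_def)

lemma fixes_incl_homology_elem_row:
  assumes "j < n" shows "fixes_incl_homology n (elem n j a :: 'a::ring_1 vec \<Rightarrow> 'a vec)"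
proof (rule fixes_incl_homology_if_fixes_incl)
  fix \<sigma> and F :: "'a flag" assume "\<sigma> \<in> FLc n" "F \<in> \<sigma>"
  then have "\<forall>v\<in>F k. elem n j a v = v" for k
    using flag_subset_An elem_fixes_An by blast
  then have "elem n j a ` F k = F k" for k by simp
  then show "act (elem n j a) (incl n F) = incl n F"
    using elem_image_An[of j "Suc n" n a] assms by (auto simp: act_def incl_def fun_eq_iff)
qed

lemma elem_line_sum_coord_line_subset:
  assumes "i \<noteq> n" shows "elem i n a ` line_sum (coord_line n) X \<subseteq> line_sum (coord_line n) X"
proof
  fix u assume "u \<in> elem i n a ` line_sum (coord_line n) X"
  then obtain c x where u: "u = elem i n a (vadd (smult c (unit_vec n)) x)" and "x \<in> X"
    unfolding line_sum_def coord_line_def by blast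
  moreover have "u = vadd (smult (c + x i * a) (unit_vec n)) x"
    using assms unfolding u by (auto simp: elem_def vadd_def smult_def unit_vec_def fun_eq_iff algebra_simps)
  ultimately show "u \<in> line_sum (coord_line n) X" unfolding line_sum_def coord_line_def by blast
qed

lemma elem_image_line_sum_coord_line:
  assumes "i \<noteq> n" shows "elem i n a ` line_sum (coord_line n) X = line_sum (coord_line n) X"
proof
  show "line_sum (coord_line n) X \<subseteq> elem i n a ` line_sum (coord_line n) X"
  proof
    fix u assume "u \<in> line_sum (coord_line n) X"
    then have "elem i n (- a) u \<in> line_sum (coord_line n) X"
      using elem_line_sum_coord_line_subset[OF assms] by blast
    moreover have "u = elem i n a (elem i n (- a) u)" using elem_neg_elem[OF assms, of "- a"] by simp
    ultimately show "u \<in> elem i n a ` line_sum (coord_line n) X" by blast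
  qed
qed (rule elem_line_sum_coord_line_subset[OF assms])

lemma fixes_incl_homology_elem_column:
  assumes "i < n" shows "fixes_incl_homology n (elem i n a :: 'a::ring_1 vec \<Rightarrow> 'a vec)"
proof (rule fixes_incl_homology_if_fixes_prepend_line)
  show "act (elem i n a) ` \<sigma> \<in> FLc (Suc n)" if "\<sigma> \<in> FLc (Suc n)" for \<sigma> :: "'a flag set"
    using that assms by (intro act_elem_FLc) auto
  fix \<sigma> and F :: "'a flag"
  have "elem i n a vzero = (vzero :: 'a vec)" by (rule vec_linear_vzero[OF vec_linear_elem])
  moreover have "i \<noteq> n" using assms by simp
  ultimately show "act (elem i n a) (prepend_line n F) = prepend_line n F"
    using elem_image_line_sum_coord_line[OF \<open>i \<noteq> n\<close>, where a=a] elem_image_An[of n "Suc n" i a]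
    by (simp add: act_def prepend_line_def fun_eq_iff)
qed

lemma elem_commutator:
  assumes "i \<noteq> n" "j \<noteq> n" "i \<noteq> j"
  shows "(elem i j a :: 'a::ring_1 vec \<Rightarrow> 'a vec)
           = elem n j (- 1) \<circ> elem i n (- a) \<circ> elem n j 1 \<circ> elem i n a"
  using assms by (auto simp: elem_def fun_eq_iff algebra_simps)

lemma fixes_incl_homology_elem:
  assumes "i < Suc n" "j < Suc n" "i \<noteq> j"
  shows "fixes_incl_homology n (elem i j a :: 'a::ring_1 vec \<Rightarrow> 'a vec)"
proof -
  have preserves: "act (elem i' j' b) ` \<sigma> \<in> FLc (Suc n)"
    if "j' \<le> n" "i' \<noteq> j'" "\<sigma> \<in> FLc (Suc n)" for i' j' and b :: 'a and \<sigma>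
    using that by (intro act_elem_FLc) auto
  consider "i = n" | "j = n" | "i < n" "j < n" using assms by linarith
  then show ?thesis
  proof cases
    case 1
    then show ?thesis using assms fixes_incl_homology_elem_row[of j n a] by simp
  next
    case 2
    then show ?thesis using assms fixes_incl_homology_elem_column[of i n a] by simp
  next
    case 3
    then have "i \<noteq> n" "j \<noteq> n" by simp_all
    then show ?thesis
      unfolding elem_commutator[OF \<open>i \<noteq> n\<close> \<open>j \<noteq> n\<close> assms(3)] comp_assoc using 3
      by (intro fixes_incl_homology_comp fixes_incl_homology_elem_row
          fixes_incl_homology_elem_column preserves) auto
  qed
qed

lemma fixes_incl_homology_En: "g \<in> En (Suc n) \<Longrightarrow> fixes_incl_homology n g"
proof (induction rule: En.induct)
  case En_id
  show ?case by (rule fixes_incl_homology_id)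
next
  case (En_step g i j a)
  then show ?case
    by (intro fixes_incl_homology_comp fixes_incl_homology_elem act_elem_FLc) auto
qed

theorem En_acts_trivially_on_incl_homology:
  assumes "g \<in> En (Suc n)" "cycle (FLc n) q z"
  shows "homologous (FLc (Suc n)) q (push (act g) (push (incl n) z)) (push (incl n) z)"
  using fixes_incl_homology_En[OF assms(1)] assms(2)
  by (simp add: fixes_incl_homology_def push_push finite_supp_cycle)

section \<open>The stable complex \<open>FL(A\<^sup>\<infinity>)\<close>\<close>

definition trunc_flag :: "nat \<Rightarrow> 'a::ring_1 flag \<Rightarrow> 'a flag" where
  "trunc_flag N F = (\<lambda>k. if k \<le> N then F k else An N)"

lemma trunc_flag_ext_inf: "\<sigma> \<in> FLc n \<Longrightarrow> F \<in> \<sigma> \<Longrightarrow> trunc_flag n (ext_inf n F) = F"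
  by (erule (1) FLc_vertexE) (auto simp: fun_eq_iff trunc_flag_def ext_inf_def flag_of_def)

lemma trunc_flag_Suc_ext_inf:
  "n \<le> N \<Longrightarrow> trunc_flag (Suc N) (ext_inf n F) = incl N (trunc_flag N (ext_inf n F))"
  by (auto simp: fun_eq_iff trunc_flag_def ext_inf_def incl_def le_Suc_eq)

lemma trunc_flag_ext_inf_FLc:
  assumes "\<sigma> \<in> FLc n" "n \<le> N" shows "(trunc_flag N \<circ> ext_inf n) ` \<sigma> \<in> FLc N"
  using assms(2)
proof (induction N rule: dec_induct)
  case base
  have "(trunc_flag n \<circ> ext_inf n) ` \<sigma> = \<sigma>"
    using trunc_flag_ext_inf[OF assms(1)] by (force simp: image_iff)
  then show ?case using assms(1) by simp
next
  case (step N)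
  then show ?case
    using incl_FLc[OF step.IH] by (simp add: image_comp comp_def trunc_flag_Suc_ext_inf)
qed

lemma ext_inf_trunc_flag: "n \<le> N \<Longrightarrow> ext_inf N (trunc_flag N (ext_inf n F)) = ext_inf n F"
  by (auto simp: fun_eq_iff trunc_flag_def ext_inf_def)

lemma ext_inf_incl: "ext_inf (Suc N) (incl N F) = ext_inf N F"
  by (auto simp: fun_eq_iff incl_def ext_inf_def le_Suc_eq)

lemma En_image_An: "g \<in> En m \<Longrightarrow> m \<le> k \<Longrightarrow> g ` An k = An k"
proof (induction rule: En.induct)
  case (En_step g i j a)
  then have "elem i j a ` g ` An k = An k" using elem_image_An[of j k i a] by simp
  then show ?case by (simp add: image_comp)
qed simp

lemma En_mono: "g \<in> En m \<Longrightarrow> m \<le> m' \<Longrightarrow> g \<in> En m'"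
  by (induction rule: En.induct) (auto intro: En.intros)

lemma ext_inf_act_incl:
  assumes "g \<in> En (Suc N)" shows "ext_inf (Suc N) (act g (incl N F)) = act g (ext_inf N F)"
  using En_image_An[OF assms] by (auto simp: fun_eq_iff ext_inf_def act_def incl_def le_Suc_eq)

lemma cycle_push:
  assumes z: "cycle K q z" and f: "\<And>s. s \<in> supp z \<Longrightarrow> f ` set s \<in> K'"
  shows "cycle K' q (push f z)"
proof -
  have "chain (set ` supp z) q z" using z by (auto simp: cycle_def chain_def osimplex_def)
  then have "chain K' q (push f z)" by (rule chain_push) (use f in blast)
  moreover have "bd (push f z) = push f (bd z)" using finite_supp_cycle[OF z] by (rule bd_push)
  then have "q = 0 \<or> (\<forall>t. bd (push f z) t = 0)"
    using z by (auto simp: cycle_def push_def supp_def)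
  ultimately show ?thesis by (simp add: cycle_def)
qed

lemma cycle_FLinf_finite_level:
  assumes z: "cycle FLinf q z"
  obtains N z' where "m \<le> N" "cycle (FLc N) q z'" "push (ext_inf N) z' = z"
proof -
  have "\<forall>s\<in>supp z. \<exists>n S. S \<in> FLc n \<and> set s = ext_inf n ` S"
    using set_in_cycle[OF z] unfolding FLinf_def by blast
  then obtain lvl S where lvl: "\<And>s. s \<in> supp z \<Longrightarrow> S s \<in> FLc (lvl s) \<and> set s = ext_inf (lvl s) ` S s"
    by metis
  define N where "N = Max (insert m (lvl ` supp z))"
  have fin: "finite (insert m (lvl ` supp z))" using finite_supp_cycle[OF z] by simp
  have N: "m \<le> N" "\<And>s. s \<in> supp z \<Longrightarrow> lvl s \<le> N"
    unfolding N_def using Max_ge[OF fin] by auto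
  have "trunc_flag N ` set s \<in> FLc N" if "s \<in> supp z" for s
    using trunc_flag_ext_inf_FLc[of "S s" "lvl s" N] lvl[OF that] N(2)[OF that]
    by (simp add: image_comp)
  then have "cycle (FLc N) q (push (trunc_flag N) z)" by (rule cycle_push[OF z])
  moreover have "push (ext_inf N) (push (trunc_flag N) z) = z"
  proof -
    have "ext_inf N (trunc_flag N F) = F" if "s \<in> supp z" "F \<in> set s" for s F
      using lvl[OF that(1)] that(2) ext_inf_trunc_flag[OF N(2)[OF that(1)]] by auto
    then have "push (ext_inf N \<circ> trunc_flag N) z = push id z"
      by (intro push_cong map_cong) auto
    then show ?thesis by (simp add: push_push push_id finite_supp_cycle[OF z])
  qed
  ultimately show ?thesis using N(1) that by blast
qed

theorem E_acts_trivially_on_FLinf_homology: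
  fixes g :: "'a::ring_1 vec \<Rightarrow> 'a vec"
  assumes g: "g \<in> E_all" and z: "cycle FLinf q z"
  shows "homologous FLinf q (push (act g) z) z"
proof -
  obtain m where "g \<in> En m" using g unfolding E_all_def by blast
  obtain N z' where "m \<le> N" and z': "cycle (FLc N) q z'" and z_eq: "push (ext_inf N) z' = z"
    using cycle_FLinf_finite_level[OF z] .
  have gN: "g \<in> En (Suc N)" using En_mono[OF \<open>g \<in> En m\<close>] \<open>m \<le> N\<close> by simp
  have fin: "finite (supp z')" by (rule finite_supp_cycle[OF z'])
  have "homologous FLinf q (push (ext_inf (Suc N)) (push (act g) (push (incl N) z')))
                           (push (ext_inf (Suc N)) (push (incl N) z'))"
    using En_acts_trivially_on_incl_homology[OF gN z']
    by (rule homologous_push) (auto simp: FLinf_def finite_supp_push fin)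
  moreover have "push (ext_inf (Suc N)) (push (act g) (push (incl N) z')) = push (act g) z"
  proof -
    have "ext_inf (Suc N) \<circ> (act g \<circ> incl N) = act g \<circ> ext_inf N"
      using ext_inf_act_incl[OF gN] by auto
    then show ?thesis
      by (simp add: push_push fin finite_supp_push flip: z_eq)
  qed
  moreover have "push (ext_inf (Suc N)) (push (incl N) z') = z"
  proof -
    have "ext_inf (Suc N) \<circ> incl N = (ext_inf N :: 'a flag \<Rightarrow> 'a flag)"
      by (simp add: fun_eq_iff ext_inf_incl)
    then show ?thesis using z_eq by (simp add: push_push fin)
  qed
  ultimately show ?thesis by simp
qed

theorem corollary9:
  fixes n :: nat
  assumes "IBN TYPE('a::ring_1)"
  shows "(\<forall>(g :: 'a vec \<Rightarrow> 'a vec) q z. g \<in> En (Suc n) \<and> cycle (FLc n) q z \<longrightarrow>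
            homologous (FLc (Suc n)) q (push (act g) (push (incl n) z)) (push (incl n) z))
       \<and> (\<forall>(g :: 'a vec \<Rightarrow> 'a vec) q z. g \<in> E_all \<and> cycle FLinf q z \<longrightarrow>
            homologous FLinf q (push (act g) z) z)"
  using En_acts_trivially_on_incl_homology E_acts_trivially_on_FLinf_homology by blast

end
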